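(* Let $n \ge 2$. (a) If $n\in\{2,3\}$, then $\dim_{1,f}(P_n)=1$; if $n\in\{4,5\}$, then $\dim_{1,f}(P_n)=\frac{8-n}{7-n}$. (b) If $n\ge 6$, then $\dim_{1,f}(P_n)=\frac{n+1}{4}$ if $n\equiv1 \pmod4$, and $\dim_{1,f}(P_n)=\lceil\frac{n}{4}\rceil$ if $n\equiv2$ or $3\pmod4$. (c) If $n\ge 8$ and $n\equiv0 \pmod4$, then $\frac{n}{4}\le\dim_{1,f}(P_n)\le\frac{n+2}{4}$.
   Context: $P_n$ is the path on $n$ vertices. $d(x,y)$ is the distance in $G$. $d_1(x,y)=\min\{d(x,y),2\}$ and $R_1\{x,y\}=\{z\in V(G): d_1(x,z)\neq d_1(y,z)\}$. For a function $g$ on $V(G)$ and $U\subseteq V(G)$, $g(U)=\sum_{s\in U}g(s)$. A function $h:V(G)\to[0,1]$ is a $1$-truncated resolving function of $G$ if $h(R_1\{x,y\})\ge 1$ for all distinct $x,y\in V(G)$; $\dim_{1,f}(G)$ is the minimum of $h(V(G))$ over all such $h$. *)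

theory Defs
  imports Complex_Main
begin

text \<open>Path P_n on vertex set {0..<n}, edges between i and i+1; its graph
distance is |i - j|.\<close>

definition path_dist :: "nat \<Rightarrow> nat \<Rightarrow> nat" where
  "path_dist x y = (if x \<le> y then y - x else x - y)"

definition trunc1_dist :: "('a \<Rightarrow> 'a \<Rightarrow> nat) \<Rightarrow> 'a \<Rightarrow> 'a \<Rightarrow> nat" where
  "trunc1_dist d x y = min (d x y) 2"

definition R1 :: "'a set \<Rightarrow> ('a \<Rightarrow> 'a \<Rightarrow> nat) \<Rightarrow> 'a \<Rightarrow> 'a \<Rightarrow> 'a set" where
  "R1 V d x y = {z \<in> V. trunc1_dist d x z \<noteq> trunc1_dist d y z}"

definition trunc1_resolving_function ::
  "'a set \<Rightarrow> ('a \<Rightarrow> 'a \<Rightarrow> nat) \<Rightarrow> ('a \<Rightarrow> real) \<Rightarrow> bool" where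
  "trunc1_resolving_function V d h \<longleftrightarrow>
     (\<forall>v\<in>V. 0 \<le> h v \<and> h v \<le> 1) \<and>
     (\<forall>x\<in>V. \<forall>y\<in>V. x \<noteq> y \<longrightarrow> sum h (R1 V d x y) \<ge> 1)"

text \<open>The minimum of h(V) over all 1-truncated resolving functions
(written as Inf; the minimum is attained for finite V).\<close>

definition frac_trunc1_dim :: "'a set \<Rightarrow> ('a \<Rightarrow> 'a \<Rightarrow> nat) \<Rightarrow> real" where
  "frac_trunc1_dim V d = Inf {sum h V | h. trunc1_resolving_function V d h}"

definition path_dim1f :: "nat \<Rightarrow> real" where
  "path_dim1f n = frac_trunc1_dim {0..<n} path_dist"

end

theory Submission
  imports Defs
begin

text \<open>For lower bounds, note that the adjacent vertices a + 1 and a + 2 are resolved only by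
  vertices of the window {a..a + 3}, so every four consecutive vertices carry weight at least 1.
  Likewise the pairs 0, 1 and n - 2, n - 1 force weight 1 on the three vertices at either end, and
  the pair 0, n - 1 forces weight 1 on {0, 1, n - 2, n - 1}. Tiling the path by such windows gives
  the lower bounds.

  For upper bounds, note that when x < y the flanks x - 1, x and y, y + 1 (as far as they exist)
  always resolve x and y. So a weighting is resolving as soon as every flank carries weight 1/2.
  Weight 1/2 on the even vertices (for odd n) does this, and so does weight 1/4 everywhere plus 1/4
  on both end vertices. For n = 4, every pair is resolved by at least three vertices, so the
  constant weight 1/3 works.\<close>

lemma R1_commute: "R1 V d x y = R1 V d y x"
  unfolding R1_def by auto

lemma trunc1_resolving_functionI:
  fixes V :: "'a::linorder set"
  assumes "\<And>v. v \<in> V \<Longrightarrow> 0 \<le> h v \<and> h v \<le> 1"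
    and "\<And>x y. x \<in> V \<Longrightarrow> y \<in> V \<Longrightarrow> x < y \<Longrightarrow> 1 \<le> sum h (R1 V d x y)"
  shows "trunc1_resolving_function V d h"
  unfolding trunc1_resolving_function_def
  using assms by (metis R1_commute linorder_neq_iff)

lemma trunc1_resolving_nonneg:
  "trunc1_resolving_function V d h \<Longrightarrow> v \<in> V \<Longrightarrow> 0 \<le> h v"
  unfolding trunc1_resolving_function_def by blast

lemma trunc1_resolving_sum_superset_ge_1:
  assumes h: "trunc1_resolving_function V d h" and "finite V"
    and "x \<in> V" "y \<in> V" "x \<noteq> y" "R1 V d x y \<subseteq> S" "S \<subseteq> V"
  shows "1 \<le> sum h S"
proof -
  have "1 \<le> sum h (R1 V d x y)"
    using h assms(3-5) unfolding trunc1_resolving_function_def by blast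
  also have "\<dots> \<le> sum h S"
    using assms(2,6,7) trunc1_resolving_nonneg[OF h]
    by (intro sum_mono2) (auto intro: finite_subset)
  finally show ?thesis .
qed

lemma frac_trunc1_dim_le:
  assumes "trunc1_resolving_function V d h"
  shows "frac_trunc1_dim V d \<le> sum h V"
proof -
  have "bdd_below {sum h V | h. trunc1_resolving_function V d h}"
    by (rule bdd_belowI[of _ 0]) (auto intro: sum_nonneg trunc1_resolving_nonneg)
  with assms show ?thesis
    unfolding frac_trunc1_dim_def by (auto intro: cInf_lower)
qed

lemma frac_trunc1_dim_ge:
  assumes "trunc1_resolving_function V d h"
    and "\<And>h. trunc1_resolving_function V d h \<Longrightarrow> c \<le> sum h V"
  shows "c \<le> frac_trunc1_dim V d"
  unfolding frac_trunc1_dim_def by (rule cInf_greatest) (use assms in auto)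

abbreviation path_resolving :: "nat \<Rightarrow> (nat \<Rightarrow> real) \<Rightarrow> bool" where
  "path_resolving n h \<equiv> trunc1_resolving_function {0..<n} path_dist h"

lemma mem_path_R1:
  "z \<in> R1 {0..<n} path_dist x y \<longleftrightarrow>
     z < n \<and> min (path_dist x z) 2 \<noteq> min (path_dist y z) 2"
  by (simp add: R1_def trunc1_dist_def)

(* With truncated subtraction, {x - 1..x} = {0} for x = 0; the min clips the right flank. *)

lemma path_R1_flanks_subset:
  "x < y \<Longrightarrow> y < n \<Longrightarrow>
    {x - 1..x} \<union> {y..<min (y + 2) n} \<subseteq> R1 {0..<n} path_dist x y"
  by (auto simp: mem_path_R1 path_dist_def)

lemma path_resolvingI_flanks:
  assumes "\<And>v. v < n \<Longrightarrow> 0 \<le> h v \<and> h v \<le> 1"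
    and "\<And>x. x < n \<Longrightarrow> 1/2 \<le> sum h {x - 1..x}"
    and "\<And>y. y < n \<Longrightarrow> 1/2 \<le> sum h {y..<min (y + 2) n}"
  shows "path_resolving n h"
proof (rule trunc1_resolving_functionI)
  fix x y assume "x \<in> {0..<n}" "y \<in> {0..<n}" "x < y"
  then have "1 \<le> sum h {x - 1..x} + sum h {y..<min (y + 2) n}"
    using assms(2)[of x] assms(3)[of y] by simp
  also have "\<dots> = sum h ({x - 1..x} \<union> {y..<min (y + 2) n})"
    using \<open>x < y\<close> by (intro sum.union_disjoint[symmetric]) auto
  also have "\<dots> \<le> sum h (R1 {0..<n} path_dist x y)"
  proof (rule sum_mono2)
    show "finite (R1 {0..<n} path_dist x y)"
      by (rule finite_subset[of _ "{0..<n}"]) (auto simp: R1_def)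
    show "{x - 1..x} \<union> {y..<min (y + 2) n} \<subseteq> R1 {0..<n} path_dist x y"
      using \<open>x < y\<close> \<open>y \<in> {0..<n}\<close> by (intro path_R1_flanks_subset) auto
  qed (auto simp: mem_path_R1 assms(1))
  finally show "1 \<le> sum h (R1 {0..<n} path_dist x y)" .
qed (use assms(1) in auto)

definition half_on_evens :: "nat \<Rightarrow> real" where
  "half_on_evens z = (if even z then 1/2 else 0)"

lemma half_on_evens_sum_ge:
  assumes "finite A" "z \<in> A" "even z"
  shows "1/2 \<le> sum half_on_evens A"
  using member_le_sum[OF assms(2), of half_on_evens] assms
  by (simp add: half_on_evens_def)

lemma path_resolving_half_on_evens:
  assumes "odd n"
  shows "path_resolving n half_on_evens"
proof (rule path_resolvingI_flanks)
  fix x :: nat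
  have "(if even x then x else x - 1) \<in> {x - 1..x}" "even (if even x then x else x - 1)"
    by auto
  then show "1/2 \<le> sum half_on_evens {x - 1..x}"
    by (intro half_on_evens_sum_ge) auto
next
  fix y assume "y < n"
  then have "(if even y then y else y + 1) \<in> {y..<min (y + 2) n}"
    "even (if even y then y else y + 1)"
    using assms by (auto simp: min_def) presburger
  then show "1/2 \<le> sum half_on_evens {y..<min (y + 2) n}"
    by (intro half_on_evens_sum_ge) auto
qed (simp add: half_on_evens_def)

lemma sum_half_on_evens:
  assumes "odd n"
  shows "sum half_on_evens {0..<n} = (real n + 1) / 4"
proof -
  obtain m where "n = 2 * m + 1" using assms by (rule oddE)
  moreover have "sum half_on_evens {0..<2 * m + 1} = (real m + 1) / 2"
    by (induction m) (simp_all add: half_on_evens_def)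
  ultimately show ?thesis by simp
qed

definition quarter_plus_ends :: "nat \<Rightarrow> nat \<Rightarrow> real" where
  "quarter_plus_ends n z = 1/4 + (if z = 0 then 1/4 else 0) + (if z = n - 1 then 1/4 else 0)"

lemma quarter_plus_ends_sum_ge:
  assumes "finite A" "2 \<le> card A \<or> 0 \<in> A \<or> n - 1 \<in> A"
  shows "1/2 \<le> sum (quarter_plus_ends n) A"
proof -
  from assms(2) consider "2 \<le> card A" | z where "z \<in> A" "1/2 \<le> quarter_plus_ends n z"
    by (auto simp: quarter_plus_ends_def)
  then show ?thesis
  proof cases
    case 1
    moreover have "real (card A) * (1/4) \<le> sum (quarter_plus_ends n) A"
      by (rule sum_bounded_below) (simp add: quarter_plus_ends_def)
    ultimately show ?thesis by simp
  next
    case 2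
    note \<open>1/2 \<le> quarter_plus_ends n z\<close>
    also have "quarter_plus_ends n z \<le> sum (quarter_plus_ends n) A"
      by (rule member_le_sum) (use 2(1) assms(1) in \<open>auto simp: quarter_plus_ends_def\<close>)
    finally show ?thesis .
  qed
qed

lemma path_resolving_quarter_plus_ends: "path_resolving n (quarter_plus_ends n)"
proof (rule path_resolvingI_flanks)
  fix x :: nat
  show "1/2 \<le> sum (quarter_plus_ends n) {x - 1..x}"
    by (rule quarter_plus_ends_sum_ge) (cases x, auto)
next
  fix y assume "y < n"
  then show "1/2 \<le> sum (quarter_plus_ends n) {y..<min (y + 2) n}"
    by (intro quarter_plus_ends_sum_ge) (auto simp: min_def)
qed (simp add: quarter_plus_ends_def)

lemma sum_quarter_plus_ends:
  "1 \<le> n \<Longrightarrow> sum (quarter_plus_ends n) {0..<n} = (real n + 2) / 4"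
  unfolding quarter_plus_ends_def by (simp add: sum.distrib)

lemma card_R1_path4_ge_3: "x < y \<Longrightarrow> y < 4 \<Longrightarrow> 3 \<le> card (R1 {0..<4} path_dist x y)"
proof -
  assume "x < y" "y < 4"
  then consider "x = 0" "y = 1" | "x = 0" "y = 2" | "x = 0" "y = 3"
    | "x = 1" "y = 2" | "x = 1" "y = 3" | "x = 2" "y = 3" by linarith
  moreover have "{0..<4::nat} = {0, 1, 2, 3}" by auto
  \<comment> \<open>as an intersection with the explicit vertex set, R1 is evaluated by Int_insert_left\<close>
  moreover have "R1 V d x y = V \<inter> {z. trunc1_dist d x z \<noteq> trunc1_dist d y z}" for V d
    by (auto simp: R1_def)
  ultimately show ?thesis
    by cases (simp_all add: trunc1_dist_def path_dist_def Int_insert_left)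
qed

lemma path_resolving_4_const_third: "path_resolving 4 (\<lambda>_. 1/3)"
proof (rule trunc1_resolving_functionI)
  fix x y :: nat assume "x \<in> {0..<4}" "y \<in> {0..<4}" "x < y"
  then show "1 \<le> sum (\<lambda>_. 1/3 :: real) (R1 {0..<4} path_dist x y)"
    using card_R1_path4_ge_3[of x y] by simp
qed simp

lemma path_resolving_sum_ge_1:
  assumes "path_resolving n h" "x < n" "y < n" "x \<noteq> y"
    and "R1 {0..<n} path_dist x y \<subseteq> S" "S \<subseteq> {0..<n}"
  shows "1 \<le> sum h S"
  using trunc1_resolving_sum_superset_ge_1[OF assms(1)] assms(2-) by simp

lemma path_resolving_sum_window:
  "path_resolving n h \<Longrightarrow> a + 4 \<le> n \<Longrightarrow> 1 \<le> sum h {a..<a + 4}"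
  by (rule path_resolving_sum_ge_1[of n h "a + 1" "a + 2"])
    (auto simp: mem_path_R1 path_dist_def split: if_splits)

lemma path_resolving_sum_left_end:
  "path_resolving n h \<Longrightarrow> 3 \<le> n \<Longrightarrow> 1 \<le> sum h {0..<3}"
  by (rule path_resolving_sum_ge_1[of n h 0 1])
    (auto simp: mem_path_R1 path_dist_def split: if_splits)

lemma path_resolving_sum_right_end:
  "path_resolving n h \<Longrightarrow> 3 \<le> n \<Longrightarrow> 1 \<le> sum h {n - 3..<n}"
  by (rule path_resolving_sum_ge_1[of n h "n - 2" "n - 1"])
    (auto simp: mem_path_R1 path_dist_def split: if_splits)

lemma path_resolving_sum_both_ends:
  assumes "path_resolving n h" "4 \<le> n"
  shows "1 \<le> sum h {0..<2} + sum h {n - 2..<n}"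
proof -
  have "1 \<le> sum h ({0..<2} \<union> {n - 2..<n})"
    using assms by (intro path_resolving_sum_ge_1[of n h 0 "n - 1"])
      (auto simp: mem_path_R1 path_dist_def split: if_splits)
  also have "\<dots> = sum h {0..<2} + sum h {n - 2..<n}"
    using assms(2) by (intro sum.union_disjoint) auto
  finally show ?thesis .
qed

lemma path_resolving_sum_windows:
  assumes h: "path_resolving n h" and "a + 4 * j \<le> b" "b \<le> n"
  shows "real j \<le> sum h {a..<b}"
proof -
  have "real j \<le> sum h {a..<a + 4 * j}"
    using assms(2,3)
  proof (induction j)
    case (Suc j)
    have "a + 4 * Suc j = a + 4 * j + 4" by simp
    then have split: "sum h {a..<a + 4 * Suc j}
        = sum h {a..<a + 4 * j} + sum h {a + 4 * j..<a + 4 * j + 4}"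
      by (simp only: sum.atLeastLessThan_concat le_add1)
    have "real j \<le> sum h {a..<a + 4 * j}" using Suc by simp
    moreover have "1 \<le> sum h {a + 4 * j..<a + 4 * j + 4}"
      using Suc.prems by (intro path_resolving_sum_window[OF h]) simp
    ultimately show ?case using split by simp
  qed simp
  also have "\<dots> \<le> sum h {a..<b}"
    using assms(2,3) trunc1_resolving_nonneg[OF h] by (intro sum_mono2) auto
  finally show ?thesis .
qed

lemma sum_atLeastLessThan_split3:
  fixes f :: "nat \<Rightarrow> 'a::comm_monoid_add"
  shows "a \<le> b \<Longrightarrow> b \<le> c \<Longrightarrow> c \<le> d \<Longrightarrow>
    sum f {a..<d} = sum f {a..<b} + sum f {b..<c} + sum f {c..<d}"
  by (simp add: sum.atLeastLessThan_concat)

lemma path_resolving_total_ge_1: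
  "path_resolving n h \<Longrightarrow> 2 \<le> n \<Longrightarrow> 1 \<le> sum h {0..<n}"
  by (rule path_resolving_sum_ge_1[of n h 0 1]) (auto simp: R1_def)

lemma path_resolving_total_ge_windows:
  assumes h: "path_resolving n h" and "4 * j + 6 \<le> n"
  shows "real j + 2 \<le> sum h {0..<n}"
proof -
  have "sum h {0..<n} = sum h {0..<3} + sum h {3..<n - 3} + sum h {n - 3..<n}"
    using assms(2) by (intro sum_atLeastLessThan_split3) auto
  moreover have "real j \<le> sum h {3..<n - 3}"
    using assms(2) by (intro path_resolving_sum_windows[OF h]) auto
  ultimately show ?thesis
    using path_resolving_sum_left_end[OF h] path_resolving_sum_right_end[OF h] assms(2) by simp
qed

text \<open>For n = 4 k + 1 no single tiling works; averaging the two tilings that put a 3-vertex end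
  window at the left and at the right, respectively, leaves the two 2-vertex end segments, which
  together carry weight at least 1.\<close>

lemma path_resolving_total_ge_mod4_eq_1:
  assumes h: "path_resolving n h" and n: "n = 4 * k + 1" "1 \<le> k"
  shows "real k + 1/2 \<le> sum h {0..<n}"
proof -
  have "sum h {0..<n} = sum h {0..<3} + sum h {3..<n - 2} + sum h {n - 2..<n}"
    using n by (intro sum_atLeastLessThan_split3) auto
  moreover have "sum h {0..<n} = sum h {0..<2} + sum h {2..<n - 3} + sum h {n - 3..<n}"
    using n by (intro sum_atLeastLessThan_split3) auto
  moreover have "real (k - 1) \<le> sum h {3..<n - 2}" "real (k - 1) \<le> sum h {2..<n - 3}"
    using n by (intro path_resolving_sum_windows[OF h]; simp)+
  ultimately show ?thesis
    using path_resolving_sum_left_end[OF h] path_resolving_sum_right_end[OF h]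
      path_resolving_sum_both_ends[OF h] n by simp
qed

lemma path_resolving_4_total_ge:
  assumes h: "path_resolving 4 h"
  shows "4/3 \<le> sum h {0..<4}"
proof -
  have "1 \<le> sum h {0, 1, 2}" "1 \<le> sum h {1, 2, 3}"
    "1 \<le> sum h {0, 2, 3}" "1 \<le> sum h {0, 1, 3}"
    by (rule path_resolving_sum_ge_1[OF h, of 0 1] path_resolving_sum_ge_1[OF h, of 2 3]
        path_resolving_sum_ge_1[OF h, of 0 2] path_resolving_sum_ge_1[OF h, of 1 3];
        auto simp: mem_path_R1 path_dist_def split: if_splits)+
  moreover have "{0..<4::nat} = {0, 1, 2, 3}" by auto
  ultimately show ?thesis by simp
qed

lemma path_dim1f_eqI:
  assumes "path_resolving n h" "sum h {0..<n} = c"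
    and "\<And>h. path_resolving n h \<Longrightarrow> c \<le> sum h {0..<n}"
  shows "path_dim1f n = c"
  using frac_trunc1_dim_le[OF assms(1)] frac_trunc1_dim_ge[OF assms(1,3)] assms(2)
  unfolding path_dim1f_def by linarith

lemma path_dim1f_4: "path_dim1f 4 = 4/3"
  by (rule path_dim1f_eqI[OF path_resolving_4_const_third _ path_resolving_4_total_ge]) simp

lemma path_dim1f_mod4_eq_1:
  assumes "n mod 4 = 1" "5 \<le> n"
  shows "path_dim1f n = (real n + 1) / 4"
proof -
  define k where "k = n div 4"
  have n: "n = 4 * k + 1" "1 \<le> k" using assms unfolding k_def by presburger+
  then have "odd n" by simp
  show ?thesis
  proof (rule path_dim1f_eqI[OF path_resolving_half_on_evens sum_half_on_evens])
    fix h assume "path_resolving n h"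
    from path_resolving_total_ge_mod4_eq_1[OF this n] show "(real n + 1) / 4 \<le> sum h {0..<n}"
      using n by simp
  qed fact+
qed

lemma ceiling_quarter_nat: "n mod 4 \<noteq> 0 \<Longrightarrow> \<lceil>real n / 4\<rceil> = int (n div 4) + 1"
  by (rule ceiling_unique) (use div_mult_mod_eq[of n 4] in linarith)+

lemma path_dim1f_mod4_eq_2_or_3:
  assumes "n mod 4 = 2 \<or> n mod 4 = 3"
  shows "path_dim1f n = of_int \<lceil>real n / 4\<rceil>"
proof -
  define k where "k = n div 4"
  have n: "n = 4 * k + 2 \<or> n = 4 * k + 3" using assms unfolding k_def by presburger
  have lower: "real k + 1 \<le> sum h {0..<n}" if h: "path_resolving n h" for h
  proof (cases "k = 0")
    case True
    then show ?thesis using path_resolving_total_ge_1[OF h] n by auto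
  next
    case False
    with n have "4 * (k - 1) + 6 \<le> n" by auto
    from path_resolving_total_ge_windows[OF h this] show ?thesis using False by simp
  qed
  have "path_dim1f n = real k + 1"
    using n
  proof (elim disjE)
    assume "n = 4 * k + 2"
    then have "sum (quarter_plus_ends n) {0..<n} = real k + 1"
      using sum_quarter_plus_ends[of n] by simp
    then show ?thesis by (rule path_dim1f_eqI[OF path_resolving_quarter_plus_ends _ lower])
  next
    assume "n = 4 * k + 3"
    then have "odd n" "sum half_on_evens {0..<n} = real k + 1"
      using sum_half_on_evens[of n] by simp_all
    then show ?thesis by (intro path_dim1f_eqI[OF path_resolving_half_on_evens _ lower])
  qed
  moreover have "\<lceil>real n / 4\<rceil> = int k + 1"
    using assms unfolding k_def by (intro ceiling_quarter_nat) auto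
  ultimately show ?thesis by simp
qed

lemma path_dim1f_mod4_eq_0_bounds:
  assumes "n mod 4 = 0" "8 \<le> n"
  shows "real n / 4 \<le> path_dim1f n \<and> path_dim1f n \<le> (real n + 2) / 4"
proof
  define k where "k = n div 4"
  have n: "n = 4 * (k - 2) + 8" using assms unfolding k_def by presburger
  show "real n / 4 \<le> path_dim1f n"
    unfolding path_dim1f_def
  proof (rule frac_trunc1_dim_ge[OF path_resolving_quarter_plus_ends])
    fix h assume "path_resolving n h"
    from path_resolving_total_ge_windows[OF this, of "k - 2"] show "real n / 4 \<le> sum h {0..<n}"
      using n by simp
  qed
  show "path_dim1f n \<le> (real n + 2) / 4"
    using frac_trunc1_dim_le[OF path_resolving_quarter_plus_ends[of n]]
      sum_quarter_plus_ends[of n] assms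
    unfolding path_dim1f_def by linarith
qed

theorem corollary3p12:
  fixes n :: nat
  assumes "n \<ge> 2"
  shows "(n \<in> {2, 3} \<longrightarrow> path_dim1f n = 1)
       \<and> (n \<in> {4, 5} \<longrightarrow> path_dim1f n = (8 - real n) / (7 - real n))
       \<and> (n \<ge> 6 \<and> n mod 4 = 1 \<longrightarrow> path_dim1f n = (real n + 1) / 4)
       \<and> (n \<ge> 6 \<and> (n mod 4 = 2 \<or> n mod 4 = 3) \<longrightarrow> path_dim1f n = of_int \<lceil>real n / 4\<rceil>)
       \<and> (n \<ge> 8 \<and> n mod 4 = 0 \<longrightarrow> real n / 4 \<le> path_dim1f n \<and> path_dim1f n \<le> (real n + 2) / 4)"
proof (intro conjI impI)
  assume "n \<in> {2, 3}"
  then show "path_dim1f n = 1"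
    using path_dim1f_mod4_eq_2_or_3[of n] ceiling_quarter_nat[of n] by auto
next
  assume "n \<in> {4, 5}"
  then show "path_dim1f n = (8 - real n) / (7 - real n)"
    using path_dim1f_4 path_dim1f_mod4_eq_1[of 5] by auto
qed (use path_dim1f_mod4_eq_1 path_dim1f_mod4_eq_2_or_3 path_dim1f_mod4_eq_0_bounds in auto)

end
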